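(* Let $m\in\mathbb{N}$ and $\beta\in(1,\frac{m+\sqrt{m^2+4}}{2})$. For every $x\in(0,\frac{m}{\beta-1})$ there exist $n\ge0$ and maps $a_1,\ldots,a_n\in\{T_{\beta,0},\ldots,T_{\beta,m}\}$ with $(a_j\circ\cdots\circ a_1)(x)\in[0,\frac{m}{\beta-1}]$ for all $j\le n$, such that $(a_n\circ\cdots\circ a_1)(x)$ lies in the interior of the switch region $[\frac{1}{\beta},\frac{(m-1)\beta+1}{\beta(\beta-1)}]$.
   Context: $T_{\beta,i}(x)=\beta x-i$ for $i\in\{0,\ldots,m\}$. *)

theory Defs
  imports Complex_Main
begin

definition T :: "real \<Rightarrow> nat \<Rightarrow> real \<Rightarrow> real" where
  "T \<beta> i x = \<beta> * x - real i"

definition iter_T :: "real \<Rightarrow> nat list \<Rightarrow> real \<Rightarrow> real" where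
  "iter_T \<beta> ds x = foldl (\<lambda>y i. T \<beta> i y) x ds"

end

theory Submission
  imports Defs
begin

text \<open>The condition on \<beta> says exactly that \<beta> lies below the positive root of
  t^2 = m t + 1. Put L = 1/\<beta>, R = ((m-1)\<beta>+1)/(\<beta>(\<beta>-1)) and M = m/(\<beta>-1);
  then L < 1 < R < M. A point of (0, L] is pushed into (L, 1] by iterating T_0,
  which multiplies by \<beta>. A point of [R, M) is pushed down by iterating T_m, whose fixed
  point is M and which multiplies the distance to M by \<beta>; one step of T_m maps [R, M)
  into [T_m R, M) and T_m R = (m+1-\<beta>)/(\<beta>-1) > L, again by \<beta>^2 < m\<beta> + 1.\<close>

definition switch_reachable :: "nat \<Rightarrow> real \<Rightarrow> real \<Rightarrow> bool" where
  "switch_reachable m \<beta> x \<longleftrightarrow> (\<exists>ds :: nat list. (\<forall>i \<in> set ds. i \<le> m)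
     \<and> (\<forall>j \<le> length ds. iter_T \<beta> (take j ds) x \<in> {0 .. m / (\<beta> - 1)})
     \<and> iter_T \<beta> ds x \<in> {1 / \<beta> <..< ((real m - 1) * \<beta> + 1) / (\<beta> * (\<beta> - 1))})"

lemma iter_T_Cons: "iter_T \<beta> (i # ds) x = iter_T \<beta> ds (T \<beta> i x)"
  by (simp add: iter_T_def)

lemma switch_reachable_T:
  assumes "switch_reachable m \<beta> (T \<beta> i x)" and "i \<le> m" and "x \<in> {0 .. m / (\<beta> - 1)}"
  shows "switch_reachable m \<beta> x"
proof -
  obtain ds where digits: "\<forall>i \<in> set ds. i \<le> m"
    and orbit: "\<forall>j \<le> length ds. iter_T \<beta> (take j ds) (T \<beta> i x) \<in> {0 .. m / (\<beta> - 1)}"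
    and final: "iter_T \<beta> ds (T \<beta> i x) \<in> {1 / \<beta> <..< ((real m - 1) * \<beta> + 1) / (\<beta> * (\<beta> - 1))}"
    using assms(1) unfolding switch_reachable_def by blast
  have "\<forall>j \<le> length (i # ds). iter_T \<beta> (take j (i # ds)) x \<in> {0 .. m / (\<beta> - 1)}"
  proof (intro allI impI)
    fix j assume "j \<le> length (i # ds)"
    then show "iter_T \<beta> (take j (i # ds)) x \<in> {0 .. m / (\<beta> - 1)}"
      using assms(3) orbit by (cases j) (auto simp: iter_T_def)
  qed
  then show ?thesis
    unfolding switch_reachable_def using digits final assms(2)
    by (intro exI[of _ "i # ds"]) (auto simp: iter_T_Cons)
qed

lemma sq_less_of_less_pos_root:
  fixes b m :: real
  assumes "0 \<le> b" and "b < (m + sqrt (m\<^sup>2 + 4)) / 2"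
  shows "b\<^sup>2 < m * b + 1"
proof (cases "2 * b \<le> m")
  case True
  then have "b * (b - m) \<le> 0" using assms(1) by (intro mult_nonneg_nonpos) auto
  then show ?thesis by (simp add: power2_eq_square algebra_simps)
next
  case False
  then have "(2 * b - m)\<^sup>2 < (sqrt (m\<^sup>2 + 4))\<^sup>2"
    using assms(2) by (intro power_strict_mono) auto
  then show ?thesis by (simp add: power2_eq_square algebra_simps)
qed

locale switch_params =
  fixes m :: nat and \<beta> :: real
  assumes beta_gt_1: "1 < \<beta>"
    and beta_sq_less: "\<beta>\<^sup>2 < m * \<beta> + 1"
begin

definition switch_lo :: real where "switch_lo = 1 / \<beta>"

definition switch_hi :: real where "switch_hi = ((real m - 1) * \<beta> + 1) / (\<beta> * (\<beta> - 1))"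

definition bound :: real where "bound = m / (\<beta> - 1)"

lemma switch_lo_pos: "0 < switch_lo"
  using beta_gt_1 by (simp add: switch_lo_def)

lemma one_less_switch_hi: "1 < switch_hi"
  using beta_gt_1 beta_sq_less by (simp add: switch_hi_def field_simps power2_eq_square)

lemma switch_hi_less_bound: "switch_hi < bound"
proof -
  have "0 < (\<beta> - 1) * (\<beta> - 1)" using beta_gt_1 by simp
  then show ?thesis using beta_gt_1 by (simp add: switch_hi_def bound_def field_simps)
qed

lemma switch_lo_less_T_m_switch_hi: "switch_lo < T \<beta> m switch_hi"
proof -
  have "\<beta> * \<beta>\<^sup>2 < \<beta> * (m * \<beta> + 1)"
    using beta_gt_1 beta_sq_less by (intro mult_strict_left_mono) auto
  then show ?thesis
    using beta_gt_1 by (simp add: switch_lo_def switch_hi_def T_def field_simps power2_eq_square)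
qed

lemma bound_minus_T_m: "bound - T \<beta> m x = \<beta> * (bound - x)"
  using beta_gt_1 by (simp add: bound_def T_def field_simps)

lemma switch_reachable_region:
  assumes "switch_lo < x" and "x < switch_hi"
  shows "switch_reachable m \<beta> x"
  using assms switch_lo_pos switch_hi_less_bound less_trans[OF switch_lo_pos assms(1)]
  unfolding switch_reachable_def switch_lo_def switch_hi_def bound_def
  by (intro exI[of _ "[]"]) (auto simp: iter_T_def)

lemma switch_reachable_from_below:
  assumes "0 < x" and "x < switch_hi" and "switch_lo < \<beta> ^ n * x"
  shows "switch_reachable m \<beta> x"
  using assms
proof (induction n arbitrary: x)
  case 0
  then show ?case by (simp add: switch_reachable_region)
next
  case (Suc n)
  show ?case
  proof (cases "switch_lo < x")
    case True
    with Suc.prems show ?thesis by (simp add: switch_reachable_region)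
  next
    case False
    then have "\<beta> * x \<le> 1" using beta_gt_1 by (simp add: switch_lo_def field_simps)
    then have "switch_reachable m \<beta> (T \<beta> 0 x)"
      using Suc one_less_switch_hi beta_gt_1 by (intro Suc.IH) (auto simp: T_def algebra_simps)
    then show ?thesis
      by (rule switch_reachable_T)
        (use Suc.prems switch_hi_less_bound in \<open>auto simp: bound_def\<close>)
  qed
qed

lemma switch_reachable_from_above:
  assumes "switch_lo < x" and "x < bound" and "bound - switch_hi < \<beta> ^ n * (bound - x)"
  shows "switch_reachable m \<beta> x"
  using assms
proof (induction n arbitrary: x)
  case 0
  then show ?case by (simp add: switch_reachable_region)
next
  case (Suc n)
  show ?case
  proof (cases "x < switch_hi")
    case True
    with Suc.prems show ?thesis by (simp add: switch_reachable_region)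
  next
    case False
    have "T \<beta> m switch_hi \<le> T \<beta> m x"
      using False beta_gt_1 by (simp add: T_def)
    moreover have "T \<beta> m x < bound"
    proof -
      have "0 < \<beta> * (bound - x)" using Suc.prems(2) beta_gt_1 by simp
      then show ?thesis using bound_minus_T_m[of x] by linarith
    qed
    moreover have "bound - switch_hi < \<beta> ^ n * (bound - T \<beta> m x)"
      using Suc.prems(3) by (simp add: bound_minus_T_m algebra_simps)
    ultimately have "switch_reachable m \<beta> (T \<beta> m x)"
      using switch_lo_less_T_m_switch_hi by (intro Suc.IH) auto
    then show ?thesis
      by (rule switch_reachable_T)
        (use Suc.prems switch_lo_pos in \<open>auto simp: bound_def\<close>)
  qed
qed

lemma switch_reachable_interior:
  assumes "0 < x" and "x < bound"
  shows "switch_reachable m \<beta> x"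
proof (cases "x < switch_hi")
  case True
  obtain n where "switch_lo / x < \<beta> ^ n" using real_arch_pow[OF beta_gt_1] by blast
  with assms(1) have "switch_lo < \<beta> ^ n * x" by (simp add: field_simps)
  with assms(1) True show ?thesis by (rule switch_reachable_from_below)
next
  case False
  obtain n where "(bound - switch_hi) / (bound - x) < \<beta> ^ n"
    using real_arch_pow[OF beta_gt_1] by blast
  with assms(2) have "bound - switch_hi < \<beta> ^ n * (bound - x)" by (simp add: field_simps)
  moreover have "switch_lo < x"
  proof -
    have "switch_lo < 1" using beta_gt_1 by (simp add: switch_lo_def)
    then show ?thesis using False one_less_switch_hi by linarith
  qed
  ultimately show ?thesis using assms(2) by (intro switch_reachable_from_above)
qed

end

theorem lemma2p4:
  fixes m :: nat and \<beta> x :: real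
  assumes "1 < \<beta>" and "\<beta> < (m + sqrt (m\<^sup>2 + 4)) / 2"
    and "0 < x" and "x < m / (\<beta> - 1)"
  shows "\<exists>ds :: nat list. (\<forall>i \<in> set ds. i \<le> m)
           \<and> (\<forall>j \<le> length ds. iter_T \<beta> (take j ds) x \<in> {0 .. m / (\<beta> - 1)})
           \<and> iter_T \<beta> ds x \<in> {1 / \<beta> <..< ((real m - 1) * \<beta> + 1) / (\<beta> * (\<beta> - 1))}"
proof -
  have "\<beta>\<^sup>2 < m * \<beta> + 1"
    using assms(1,2) by (intro sq_less_of_less_pos_root) auto
  with assms(1) interpret switch_params m \<beta> by unfold_locales
  have "switch_reachable m \<beta> x"
    using assms(3,4) by (intro switch_reachable_interior) (simp_all add: bound_def)
  then show ?thesis unfolding switch_reachable_def .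
qed

end
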